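(* Let $G=(V,E)$ be an undirected weighted graph in which shortest paths are unique. Let $u,v\in V$, let $D\subseteq E$ be a set of $d$ edges such that $u$ and $v$ are connected in $G-D$, and let $r=\mathrm{rank}_{G-D}(u,v)$. Suppose $w$ is a vertex on $\pi_{G-D}(u,v)$ such that both $\pi(u,w)$ and $\pi(w,v)$ contain an edge of $D$. Then $\mathrm{rank}_{G-D}(u,w)\le r-1$ and $\mathrm{rank}_{G-D}(w,v)\le r-1$.
   Context: For $D\subseteq E$, $G-D$ is $G$ with the edges of $D$ removed. For a graph $H$ and vertices $a,b$, $\pi_H(a,b)$ denotes the (unique) shortest path from $a$ to $b$ in $H$, regarded as a directed path from $a$ to $b$; $\pi(a,b)=\pi_G(a,b)$. A path is $k$-decomposable if it is the concatenation of at most $k+1$ shortest paths in $G$, interleaved with at most $k$ edges. $\mathrm{rank}_{G-D}(a,b)$ is the smallest integer $i\ge 0$ such that $\pi_{G-D}(a,b)$ is an $i$-decomposable path. *)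

theory Defs
  imports Complex_Main
begin

definition graph :: "'v set \<Rightarrow> 'v set set \<Rightarrow> ('v set \<Rightarrow> real) \<Rightarrow> bool" where
  "graph V E wt \<longleftrightarrow> finite V \<and> E \<subseteq> {{a, b} | a b. a \<in> V \<and> b \<in> V \<and> a \<noteq> b}
     \<and> (\<forall>e\<in>E. wt e > 0)"

definition edges_of :: "'v list \<Rightarrow> 'v set set" where
  "edges_of p = set (map (\<lambda>(x, y). {x, y}) (zip p (tl p)))"

definition plen :: "('v set \<Rightarrow> real) \<Rightarrow> 'v list \<Rightarrow> real" where
  "plen wt p = sum_list (map (\<lambda>(x, y). wt {x, y}) (zip p (tl p)))"

definition is_path :: "'v set \<Rightarrow> 'v set set \<Rightarrow> 'v list \<Rightarrow> 'v \<Rightarrow> 'v \<Rightarrow> bool" where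
  "is_path V F p a b \<longleftrightarrow> p \<noteq> [] \<and> hd p = a \<and> last p = b \<and> distinct p
     \<and> set p \<subseteq> V \<and> edges_of p \<subseteq> F"

definition connected_in :: "'v set \<Rightarrow> 'v set set \<Rightarrow> 'v \<Rightarrow> 'v \<Rightarrow> bool" where
  "connected_in V F a b \<longleftrightarrow> (\<exists>p. is_path V F p a b)"

definition is_sp :: "'v set \<Rightarrow> 'v set set \<Rightarrow> ('v set \<Rightarrow> real) \<Rightarrow> 'v list \<Rightarrow> 'v \<Rightarrow> 'v \<Rightarrow> bool" where
  "is_sp V F wt p a b \<longleftrightarrow> is_path V F p a b \<and> (\<forall>q. is_path V F q a b \<longrightarrow> plen wt p \<le> plen wt q)"

definition unique_sp :: "'v set \<Rightarrow> 'v set set \<Rightarrow> ('v set \<Rightarrow> real) \<Rightarrow> bool" where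
  "unique_sp V F wt \<longleftrightarrow> (\<forall>a b p q. is_sp V F wt p a b \<longrightarrow> is_sp V F wt q a b \<longrightarrow> p = q)"

definition spath :: "'v set \<Rightarrow> 'v set set \<Rightarrow> ('v set \<Rightarrow> real) \<Rightarrow> 'v \<Rightarrow> 'v \<Rightarrow> 'v list" where
  "spath V F wt a b = (THE p. is_sp V F wt p a b)"

definition decomposable :: "'v set \<Rightarrow> 'v set set \<Rightarrow> ('v set \<Rightarrow> real) \<Rightarrow> nat \<Rightarrow> 'v list \<Rightarrow> bool" where
  "decomposable V E wt k P \<longleftrightarrow> (\<exists>segs. segs \<noteq> [] \<and> length segs \<le> k + 1 \<and> concat segs = P
     \<and> (\<forall>s\<in>set segs. s \<noteq> [] \<and> is_sp V E wt s (hd s) (last s))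
     \<and> (\<forall>i. Suc i < length segs \<longrightarrow> {last (segs ! i), hd (segs ! Suc i)} \<in> E))"

definition rank_GD :: "'v set \<Rightarrow> 'v set set \<Rightarrow> ('v set \<Rightarrow> real) \<Rightarrow> 'v set set \<Rightarrow> 'v \<Rightarrow> 'v \<Rightarrow> nat" where
  "rank_GD V E wt D a b = (LEAST i. decomposable V E wt i (spath V (E - D) wt a b))"

end

theory Submission
  imports Defs
begin

text \<open>Write P = \<pi>_{G-D}(u,v) as a concatenation of r + 1 shortest paths of G joined by
  edges, and let w lie in the j-th segment. Cutting that segment at w, the two halves of the
  decomposition show rank(u,w) \<le> j and rank(w,v) \<le> r - j, because subpaths of shortest paths
  are shortest paths and so the prefix and suffix of P at w are \<pi>_{G-D}(u,w) and
  \<pi>_{G-D}(w,v). Neither rank can be 0: a 0-decomposable path is a shortest path of G, so it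
  would equal \<pi>(u,w) (resp. \<pi>(w,v)), which uses an edge of D, whereas paths of G - D do not.
  Hence 1 \<le> j \<le> r - 1.\<close>

lemma plen_simps [simp]:
  "plen wt [] = 0" "plen wt [x] = 0" "plen wt (x # y # p) = wt {x, y} + plen wt (y # p)"
  by (simp_all add: plen_def)

lemma edges_of_simps [simp]:
  "edges_of [] = {}" "edges_of [x] = {}" "edges_of (x # y # p) = insert {x, y} (edges_of (y # p))"
  by (simp_all add: edges_of_def)

lemma plen_append_Cons: "plen wt (xs @ x # ys) = plen wt (xs @ [x]) + plen wt (x # ys)"
  by (induction xs rule: induct_list012) auto

lemma edges_of_append_Cons: "edges_of (xs @ x # ys) = edges_of (xs @ [x]) \<union> edges_of (x # ys)"
  by (induction xs rule: induct_list012) auto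

lemma plen_nonneg: "edges_of p \<subseteq> F \<Longrightarrow> \<forall>e\<in>F. wt e \<ge> 0 \<Longrightarrow> plen wt p \<ge> 0"
  by (induction p rule: induct_list012) auto

lemma edges_of_subset_iff_successively:
  "edges_of p \<subseteq> F \<longleftrightarrow> successively (\<lambda>x y. {x, y} \<in> F) p"
  by (induction p rule: induct_list012) auto

lemma successively_iff_nth:
  "successively P xs \<longleftrightarrow> (\<forall>i. Suc i < length xs \<longrightarrow> P (xs ! i) (xs ! Suc i))"
proof (induction xs rule: induct_list012)
  case (3 x y zs)
  have "(\<forall>i. Suc i < length (x # y # zs) \<longrightarrow> P ((x # y # zs) ! i) ((x # y # zs) ! Suc i)) \<longleftrightarrow>
    P x y \<and> (\<forall>i. Suc i < length (y # zs) \<longrightarrow> P ((y # zs) ! i) ((y # zs) ! Suc i))"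
    by (metis (no_types, lifting) Suc_less_eq length_Cons nat.exhaust nth_Cons_0 nth_Cons_Suc zero_less_Suc)
  with 3 show ?case by simp
qed auto

definition is_walk :: "'v set \<Rightarrow> 'v set set \<Rightarrow> 'v list \<Rightarrow> 'v \<Rightarrow> 'v \<Rightarrow> bool" where
  "is_walk V F p a b \<longleftrightarrow> p \<noteq> [] \<and> hd p = a \<and> last p = b \<and> set p \<subseteq> V \<and> edges_of p \<subseteq> F"

lemma is_path_iff_walk: "is_path V F p a b \<longleftrightarrow> is_walk V F p a b \<and> distinct p"
  by (auto simp: is_path_def is_walk_def)

lemma is_walk_append_Cons_iff:
  "is_walk V F (xs @ w # ys) a b \<longleftrightarrow> is_walk V F (xs @ [w]) a w \<and> is_walk V F (w # ys) w b"
proof -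
  have "edges_of (xs @ w # ys) = edges_of (xs @ [w]) \<union> edges_of (w # ys)"
    by (rule edges_of_append_Cons)
  moreover have "hd (xs @ w # ys) = hd (xs @ [w])" by (cases xs) simp_all
  ultimately show ?thesis by (auto simp: is_walk_def)
qed

lemma walk_shortcut:
  assumes "is_walk V F p a b" and nonneg: "\<forall>e\<in>F. wt e \<ge> 0"
  shows "\<exists>q. is_path V F q a b \<and> plen wt q \<le> plen wt p"
  using assms(1)
proof (induction p rule: length_induct)
  case (1 p)
  show ?case
  proof (cases "distinct p")
    case True
    with "1.prems" show ?thesis by (auto simp: is_path_iff_walk)
  next
    case False
    then obtain xs ys zs y where p: "p = xs @ y # ys @ y # zs"
      using not_distinct_decomp by fastforce
    let ?cycle = "y # ys @ [y]" and ?p' = "xs @ y # zs"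
    have "is_walk V F (xs @ [y]) a y" and "is_walk V F ((y # ys) @ y # zs) y b"
      using "1.prems" is_walk_append_Cons_iff[of V F xs y "ys @ y # zs" a b] p by simp_all
    then have "is_walk V F ?p' a b" and cycle: "is_walk V F ?cycle y y"
      using is_walk_append_Cons_iff[of V F "y # ys" y zs y b] is_walk_append_Cons_iff[of V F xs y zs a b]
      by simp_all
    have "plen wt p = plen wt ?p' + plen wt ?cycle"
      using plen_append_Cons[of wt xs y "ys @ y # zs"] plen_append_Cons[of wt "y # ys" y zs]
        plen_append_Cons[of wt xs y zs] p by simp
    moreover have "plen wt ?cycle \<ge> 0"
      using plen_nonneg[OF _ nonneg] cycle by (auto simp: is_walk_def)
    moreover have "length ?p' < length p" by (simp add: p)
    ultimately show ?thesis
      using "1.IH" \<open>is_walk V F ?p' a b\<close> by force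
  qed
qed

text \<open>is_sp only compares against simple paths; with nonnegative weights a shortest path also
  beats every walk, which is what allows splicing a detour into it.\<close>

lemma is_sp_le_walk:
  assumes "is_sp V F wt p a b" and "is_walk V F q a b" and "\<forall>e\<in>F. wt e \<ge> 0"
  shows "plen wt p \<le> plen wt q"
  using walk_shortcut[OF assms(2,3)] assms(1) unfolding is_sp_def by force

lemma is_sp_split:
  assumes sp: "is_sp V F wt (xs @ w # ys) a b" and nonneg: "\<forall>e\<in>F. wt e \<ge> 0"
  shows "is_sp V F wt (xs @ [w]) a w" and "is_sp V F wt (w # ys) w b"
proof -
  have "is_walk V F (xs @ w # ys) a b" and "distinct (xs @ w # ys)"
    using sp by (auto simp: is_sp_def is_path_iff_walk)
  then have walk_xs: "is_walk V F (xs @ [w]) a w" and walk_ys: "is_walk V F (w # ys) w b"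
    using is_walk_append_Cons_iff[of V F xs w ys a b] by simp_all
  have path_xs: "is_path V F (xs @ [w]) a w" and path_ys: "is_path V F (w # ys) w b"
    using walk_xs walk_ys \<open>distinct _\<close> by (auto simp: is_path_iff_walk)
  have "plen wt (xs @ [w]) \<le> plen wt q" if "is_path V F q a w" for q
  proof -
    have "q = butlast q @ [w]" and "is_walk V F q a w"
      using that by (auto simp: is_path_iff_walk is_walk_def)
    then have "is_walk V F (butlast q @ w # ys) a b"
      using is_walk_append_Cons_iff walk_ys by metis
    then show ?thesis
      using is_sp_le_walk[OF sp _ nonneg] plen_append_Cons \<open>q = butlast q @ [w]\<close>
      by (metis add_le_cancel_right)
  qed
  with path_xs show "is_sp V F wt (xs @ [w]) a w" by (simp add: is_sp_def)
  have "plen wt (w # ys) \<le> plen wt q" if "is_path V F q w b" for q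
  proof -
    have "q = w # tl q" and "is_walk V F q w b"
      using that by (auto simp: is_path_iff_walk is_walk_def)
    then have "is_walk V F (xs @ w # tl q) a b"
      using is_walk_append_Cons_iff walk_xs by metis
    then show ?thesis
      using is_sp_le_walk[OF sp _ nonneg] plen_append_Cons \<open>q = w # tl q\<close>
      by (metis add_le_cancel_left)
  qed
  with path_ys show "is_sp V F wt (w # ys) w b" by (simp add: is_sp_def)
qed

lemma ex_is_sp:
  assumes "finite V" and "connected_in V F a b"
  shows "\<exists>p. is_sp V F wt p a b"
proof -
  let ?paths = "{p. is_path V F p a b}"
  have "?paths \<subseteq> {xs. set xs \<subseteq> V \<and> distinct xs}" by (auto simp: is_path_def)
  then have "finite ?paths"
    using finite_subset_distinct[OF assms(1)] finite_subset by blast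
  moreover have "?paths \<noteq> {}" using assms(2) by (auto simp: connected_in_def)
  ultimately obtain p where "p \<in> ?paths" "\<forall>q\<in>?paths. plen wt p \<le> plen wt q"
    using arg_min_if_finite[of ?paths "plen wt"] by (metis not_le)
  then show ?thesis unfolding is_sp_def by blast
qed

lemma spath_eqI: "unique_sp V F wt \<Longrightarrow> is_sp V F wt p a b \<Longrightarrow> spath V F wt a b = p"
  unfolding spath_def unique_sp_def by blast

lemma spath_is_sp:
  "unique_sp V F wt \<Longrightarrow> finite V \<Longrightarrow> connected_in V F a b \<Longrightarrow> is_sp V F wt (spath V F wt a b) a b"
  using ex_is_sp spath_eqI by metis

lemma concat_eq_append_Cons:
  "concat xss = ys @ x # zs \<Longrightarrow>
    \<exists>xss1 as bs xss2. xss = xss1 @ (as @ x # bs) # xss2 \<and> ys = concat xss1 @ as \<and> zs = bs @ concat xss2"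
proof (induction xss arbitrary: ys)
  case (Cons xs xss)
  then obtain us where "xs = ys @ us \<and> us @ concat xss = x # zs \<or> xs @ us = ys \<and> concat xss = us @ x # zs"
    by (auto simp: append_eq_append_conv2)
  then show ?case
  proof (elim disjE conjE)
    assume xs: "xs = ys @ us" and "us @ concat xss = x # zs"
    then consider "us = []" "concat xss = x # zs" | bs where "us = x # bs" "zs = bs @ concat xss"
      by (cases us) auto
    then show ?case
    proof cases
      case 1
      then obtain xss1 as bs xss2 where "xss = xss1 @ (as @ x # bs) # xss2" "[] = concat xss1 @ as" "zs = bs @ concat xss2"
        using Cons.IH[of "[]"] by auto
      with xs 1 show ?thesis
        by (intro exI[of _ "xs # xss1"] exI[of _ as] exI[of _ bs] exI[of _ xss2]) simp
    next
      case 2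
      with xs show ?thesis
        by (intro exI[of _ "[]"] exI[of _ ys] exI[of _ bs] exI[of _ xss]) simp
    qed
  next
    assume "xs @ us = ys" and "concat xss = us @ x # zs"
    then obtain xss1 as bs xss2 where "xss = xss1 @ (as @ x # bs) # xss2" "us = concat xss1 @ as" "zs = bs @ concat xss2"
      using Cons.IH[of us] by auto
    with \<open>xs @ us = ys\<close> show ?case
      by (intro exI[of _ "xs # xss1"] exI[of _ as] exI[of _ bs] exI[of _ xss2]) simp
  qed
qed simp

lemma decomposable_iff_successively:
  "decomposable V E wt k P \<longleftrightarrow> (\<exists>segs. segs \<noteq> [] \<and> length segs \<le> k + 1 \<and> concat segs = P
     \<and> (\<forall>s\<in>set segs. s \<noteq> [] \<and> is_sp V E wt s (hd s) (last s))
     \<and> successively (\<lambda>s t. {last s, hd t} \<in> E) segs)"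
  by (simp add: decomposable_def successively_iff_nth)

lemma decomposable_0_iff: "decomposable V E wt 0 P \<longleftrightarrow> P \<noteq> [] \<and> is_sp V E wt P (hd P) (last P)"
proof
  assume "decomposable V E wt 0 P"
  then obtain segs where "segs \<noteq> []" "length segs \<le> 1" "concat segs = P"
    and "\<forall>s\<in>set segs. s \<noteq> [] \<and> is_sp V E wt s (hd s) (last s)"
    by (auto simp: decomposable_def)
  moreover from \<open>segs \<noteq> []\<close> \<open>length segs \<le> 1\<close> have "segs = [hd segs]"
    by (cases segs) auto
  ultimately show "P \<noteq> [] \<and> is_sp V E wt P (hd P) (last P)"
    by (metis concat.simps append_Nil2 list.set_intros(1))
next
  assume "P \<noteq> [] \<and> is_sp V E wt P (hd P) (last P)"
  then show "decomposable V E wt 0 P"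
    unfolding decomposable_def by (intro exI[of _ "[P]"]) simp
qed

lemma is_sp_singleton:
  assumes "x \<in> V"
  shows "is_sp V F wt [x] x x"
proof -
  have "q = [x]" if "is_path V F q x x" for q
    using that unfolding is_path_def
    by (metis distinct.simps(2) hd_Cons_tl last.simps last_in_set)
  with assms show ?thesis by (auto simp: is_sp_def is_path_def)
qed

lemma decomposable_path: "is_path V E P a b \<Longrightarrow> decomposable V E wt (length P - 1) P"
  unfolding decomposable_iff_successively
  by (intro exI[of _ "map (\<lambda>x. [x]) P"])
    (auto simp: is_path_def successively_map is_sp_singleton edges_of_subset_iff_successively[symmetric])

lemma decomposable_split:
  assumes "decomposable V E wt k (xs @ w # ys)" and nonneg: "\<forall>e\<in>E. wt e \<ge> 0"
  shows "\<exists>i j. i + j \<le> k \<and> decomposable V E wt i (xs @ [w]) \<and> decomposable V E wt j (w # ys)"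
proof -
  let ?linked = "successively (\<lambda>s t. {last s, hd t} \<in> E)"
  obtain segs where "length segs \<le> k + 1" "concat segs = xs @ w # ys"
    and sp: "\<forall>s\<in>set segs. s \<noteq> [] \<and> is_sp V E wt s (hd s) (last s)" and linked: "?linked segs"
    using assms(1) by (auto simp: decomposable_iff_successively)
  then obtain L as bs R where segs: "segs = L @ (as @ w # bs) # R"
    and xs: "xs = concat L @ as" and ys: "ys = bs @ concat R"
    using concat_eq_append_Cons by metis
  have hd_as: "hd (as @ w # bs) = hd (as @ [w])" by (cases as) auto
  have "is_sp V E wt (as @ w # bs) (hd (as @ [w])) (last (w # bs))"
    using sp segs hd_as by simp
  then have sp_as: "is_sp V E wt (as @ [w]) (hd (as @ [w])) w"
    and sp_bs: "is_sp V E wt (w # bs) w (last (w # bs))"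
    using is_sp_split[OF _ nonneg] by blast+
  have "decomposable V E wt (length L) (xs @ [w])"
    unfolding decomposable_iff_successively
  proof (intro exI[of _ "L @ [as @ [w]]"] conjI)
    show "?linked (L @ [as @ [w]])"
      using linked hd_as by (simp add: segs successively_append_iff)
  qed (use sp sp_as segs xs in auto)
  moreover have "decomposable V E wt (length R) (w # ys)"
    unfolding decomposable_iff_successively
  proof (intro exI[of _ "(w # bs) # R"] conjI)
    show "?linked ((w # bs) # R)"
      using linked by (simp add: segs successively_append_iff successively_Cons)
  qed (use sp sp_bs segs ys in auto)
  moreover have "length L + length R \<le> k"
    using \<open>length segs \<le> k + 1\<close> segs by simp
  ultimately show ?thesis by blast
qed

lemma decomposable_rank_GD:
  assumes "unique_sp V (E - D) wt" and "finite V" and "connected_in V (E - D) a b"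
  shows "decomposable V E wt (rank_GD V E wt D a b) (spath V (E - D) wt a b)"
proof -
  have "is_path V E (spath V (E - D) wt a b) a b"
    using spath_is_sp[OF assms] by (auto simp: is_sp_def is_path_def)
  then have "decomposable V E wt (length (spath V (E - D) wt a b) - 1) (spath V (E - D) wt a b)"
    by (rule decomposable_path)
  then show ?thesis
    unfolding rank_GD_def by (rule LeastI)
qed

lemma rank_GD_le: "decomposable V E wt k (spath V (E - D) wt a b) \<Longrightarrow> rank_GD V E wt D a b \<le> k"
  unfolding rank_GD_def by (rule Least_le)

lemma not_decomposable_0_if_avoiding:
  assumes "unique_sp V E wt" and "is_path V (E - D) p a b"
    and "edges_of (spath V E wt a b) \<inter> D \<noteq> {}"
  shows "\<not> decomposable V E wt 0 p"
proof
  assume "decomposable V E wt 0 p"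
  with assms(2) have "is_sp V E wt p a b"
    by (auto simp: decomposable_0_iff is_path_def)
  then have "spath V E wt a b = p" by (rule spath_eqI[OF assms(1)])
  with assms(2,3) show False by (auto simp: is_path_def)
qed

theorem claim3p2:
  fixes V :: "'v set" and E D :: "'v set set" and wt :: "'v set \<Rightarrow> real"
    and u v w :: 'v and d r :: nat
  assumes "graph V E wt"
    and "unique_sp V E wt" and "unique_sp V (E - D) wt"
    and "u \<in> V" and "v \<in> V"
    and "D \<subseteq> E" and "card D = d"
    and "connected_in V (E - D) u v"
    and "r = rank_GD V E wt D u v"
    and "w \<in> set (spath V (E - D) wt u v)"
    and "edges_of (spath V E wt u w) \<inter> D \<noteq> {}"
    and "edges_of (spath V E wt w v) \<inter> D \<noteq> {}"
  shows "rank_GD V E wt D u w + 1 \<le> r \<and> rank_GD V E wt D w v + 1 \<le> r"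
proof -
  have "finite V" and nonneg: "\<forall>e\<in>E. wt e \<ge> 0"
    using assms(1) by (auto simp: graph_def less_imp_le)
  obtain xs ys where P: "spath V (E - D) wt u v = xs @ w # ys"
    using assms(10) split_list by metis
  have "is_sp V (E - D) wt (xs @ w # ys) u v"
    using spath_is_sp[OF assms(3) \<open>finite V\<close> assms(8)] P by simp
  then have sp_uw: "is_sp V (E - D) wt (xs @ [w]) u w" and sp_wv: "is_sp V (E - D) wt (w # ys) w v"
    using is_sp_split[of V "E - D"] nonneg by blast+
  obtain i j where "i + j \<le> r"
    and dec_uw: "decomposable V E wt i (xs @ [w])" and dec_wv: "decomposable V E wt j (w # ys)"
    using decomposable_split[OF _ nonneg] decomposable_rank_GD[OF assms(3) \<open>finite V\<close> assms(8)] assms(9) P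
    by metis
  have "is_path V (E - D) (xs @ [w]) u w" and "is_path V (E - D) (w # ys) w v"
    using sp_uw sp_wv by (simp_all only: is_sp_def)
  then have "i \<noteq> 0" and "j \<noteq> 0"
    using not_decomposable_0_if_avoiding[OF assms(2)] assms(11,12) dec_uw dec_wv by metis+
  moreover have "rank_GD V E wt D u w \<le> i" and "rank_GD V E wt D w v \<le> j"
    using rank_GD_le spath_eqI[OF assms(3)] sp_uw sp_wv dec_uw dec_wv by metis+
  ultimately show ?thesis using \<open>i + j \<le> r\<close> by linarith
qed

end
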